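(* Let $d,N\ge1$, $\epsilon\in(0,1]$, $\delta\in[0,1]$, $\beta\in(0,1/2]$ with $N\ge d\ln(2d/\beta)$, and let $k=\max\{1,\min\{d,\lfloor\epsilon/2.17\rfloor\}\}$. Let $x(1),\dots,x(N)\in[-1,1]^d$ and let $x^*(i)$ be obtained by applying Algorithm 3 (parameters $\epsilon,\delta,k$) independently to each $x(i)$. For $j\in\{1,\dots,d\}$ put $Z_j=\frac1N\sum_{i=1}^Nx^*_j(i)$ and $X_j=\frac1N\sum_{i=1}^Nx_j(i)$. Then with probability at least $1-\beta$, $$\max_{j\in\{1,\dots,d\}}|Z_j-X_j|=O\!\left(\frac{\sqrt{d\log(d/\beta)}}{(\epsilon+2\delta)\sqrt N}\right),$$ where the implied constant is absolute.
   Context: Algorithm 2 with parameters $\epsilon'>0,\delta'\in[0,1]$: let $B_1=\frac{e^{\epsilon'}+1}{e^{\epsilon'}+2\delta'-1}$; on input $y\in[-1,1]$ it outputs $B_1$ with probability $\frac{e^{\epsilon'}+2\delta'-1}{2(e^{\epsilon'}+1)}y+\frac12$ and $-B_1$ otherwise. Algorithm 3 with parameters $\epsilon>0$, $\delta\ge0$ and $k\in\{1,\dots,d\}$: on input $x\in[-1,1]^d$, set $x^*=(0,\dots,0)$, choose a uniformly random $k$-element subset $S\subseteq\{1,\dots,d\}$, and for each $j\in S$ apply Algorithm 2 with parameters $\epsilon/k,\delta/k$ to $x_j$ to obtain $\bar x_j$ (independently over $j$) and set $x^*_j=\frac dk\bar x_j$; output $x^*$. *)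

theory Defs
  imports "HOL-Probability.Probability"
begin

definition alg2_B :: "real \<Rightarrow> real \<Rightarrow> real" where
  "alg2_B eps' del' = (exp eps' + 1) / (exp eps' + 2 * del' - 1)"

definition alg2 :: "real \<Rightarrow> real \<Rightarrow> real \<Rightarrow> real pmf" where
  "alg2 eps' del' y =
     map_pmf (\<lambda>b. if b then alg2_B eps' del' else - alg2_B eps' del')
       (bernoulli_pmf ((exp eps' + 2 * del' - 1) / (2 * (exp eps' + 1)) * y + 1 / 2))"

text \<open>Algorithm 3 on x in [-1,1]^d; coordinates are indexed by {1..d}, and the
  output vector is 0 outside the sampled k-subset S (and outside {1..d}).\<close>
definition alg3 :: "real \<Rightarrow> real \<Rightarrow> nat \<Rightarrow> nat \<Rightarrow> (nat \<Rightarrow> real) \<Rightarrow> (nat \<Rightarrow> real) pmf" where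
  "alg3 eps del k d x =
     do {
       S \<leftarrow> pmf_of_set {S. S \<subseteq> {1..d} \<and> card S = k};
       xbar \<leftarrow> Pi_pmf S 0 (\<lambda>j. alg2 (eps / real k) (del / real k) (x j));
       return_pmf (\<lambda>j. if j \<in> S then real d / real k * xbar j else 0)
     }"

definition kpar :: "nat \<Rightarrow> real \<Rightarrow> nat" where
  "kpar d eps = max 1 (min d (nat \<lfloor>eps / 2.17\<rfloor>))"

definition alg3_all :: "real \<Rightarrow> real \<Rightarrow> nat \<Rightarrow> nat \<Rightarrow> (nat \<Rightarrow> nat \<Rightarrow> real) \<Rightarrow> (nat \<Rightarrow> nat \<Rightarrow> real) pmf" where
  "alg3_all eps del d N x = Pi_pmf {1..N} (\<lambda>_. 0) (\<lambda>i. alg3 eps del (kpar d eps) d (x i))"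

end

theory Submission
  imports Defs
begin

text \<open>Since \<open>\<epsilon> \<le> 1\<close> forces \<open>k = 1\<close>, each user reports \<open>\<plusminus>d B\<close> in one uniformly random
  coordinate and \<open>0\<close> elsewhere, where \<open>B = alg2_B \<epsilon> \<delta> \<le> 4 / (\<epsilon> + 2\<delta>)\<close>. Each coordinate
  of a report is an unbiased estimate of \<open>x\<^sub>j\<close> with second moment \<open>d B\<^sup>2\<close>, so
  \<open>exp u \<le> 1 + u + u\<^sup>2\<close> for \<open>\<bar>u\<bar> \<le> 1\<close> bounds its moment generating function by
  \<open>exp (\<lambda>\<^sup>2 d B\<^sup>2)\<close> for \<open>\<bar>\<lambda>\<bar> \<le> 1 / (d B + 1)\<close>. A Chernoff bound over the \<open>N\<close>
  independent users and a union bound over the \<open>d\<close> coordinates give a deviation of at most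
  \<open>3 B \<surd>(d ln (2d/\<beta>) / N)\<close> with probability \<open>1 - \<beta>\<close>.\<close>

lemma exp_bound_abs:
  fixes u :: real
  assumes "\<bar>u\<bar> \<le> 1"
  shows "exp u \<le> 1 + u + u\<^sup>2"
proof (cases "0 \<le> u")
  case True
  then show ?thesis using exp_bound[of u] assms by simp
next
  case False
  define t where "t = - u"
  have t: "0 \<le> t" "t \<le> 1" using False assms by (auto simp: t_def)
  have "(1 - t + t\<^sup>2) * (1 + t + t\<^sup>2 / 2) = 1 + (t\<^sup>2 + t ^ 3 + t ^ 4) / 2"
    by (simp add: field_simps power2_eq_square power3_eq_cube power4_eq_xxxx)
  then have "1 \<le> (1 - t + t\<^sup>2) * (1 + t + t\<^sup>2 / 2)"
    using t by simp
  also have "\<dots> \<le> (1 - t + t\<^sup>2) * exp t"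
  proof (rule mult_left_mono)
    show "1 + t + t\<^sup>2 / 2 \<le> exp t" using exp_lower_Taylor_quadratic t by simp
    have "0 \<le> (t - 1/2)\<^sup>2 + 3/4" by simp
    then show "0 \<le> 1 - t + t\<^sup>2" by (simp add: power2_eq_square algebra_simps)
  qed
  finally have "exp (- t) \<le> 1 - t + t\<^sup>2" by (simp add: exp_minus field_simps)
  then show ?thesis by (simp add: t_def)
qed

lemma expectation_exp_le_exp_second_moment:
  fixes p :: "'a pmf" and Y :: "'a \<Rightarrow> real"
  assumes "finite (set_pmf p)"
    and mean: "measure_pmf.expectation p Y = m"
    and second_moment: "measure_pmf.expectation p (\<lambda>v. (Y v)\<^sup>2) \<le> V"
    and small: "\<And>v. v \<in> set_pmf p \<Longrightarrow> \<bar>l * (Y v - m)\<bar> \<le> 1"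
  shows "measure_pmf.expectation p (\<lambda>v. exp (l * (Y v - m))) \<le> exp (l\<^sup>2 * V)"
proof -
  have int: "integrable p f" for f :: "'a \<Rightarrow> real"
    using assms(1) by (rule integrable_measure_pmf_finite)
  have "measure_pmf.expectation p (\<lambda>v. exp (l * (Y v - m)))
      \<le> measure_pmf.expectation p (\<lambda>v. 1 + l * (Y v - m) + (l * (Y v - m))\<^sup>2)"
    by (intro integral_mono_AE int AE_pmfI exp_bound_abs small)
  also have "\<dots> = 1 + l * (measure_pmf.expectation p Y - m)
      + l\<^sup>2 * (measure_pmf.expectation p (\<lambda>v. (Y v)\<^sup>2) - 2 * m * measure_pmf.expectation p Y + m\<^sup>2)"
    by (simp add: int power2_eq_square algebra_simps)
  also have "\<dots> = 1 + l\<^sup>2 * (measure_pmf.expectation p (\<lambda>v. (Y v)\<^sup>2) - m\<^sup>2)"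
    by (simp add: mean power2_eq_square)
  also have "\<dots> \<le> 1 + l\<^sup>2 * V"
    using second_moment by (intro add_left_mono mult_left_mono) (auto simp: diff_le_eq add_increasing2)
  also have "\<dots> \<le> exp (l\<^sup>2 * V)"
    by (simp add: add.commute)
  finally show ?thesis .
qed

lemma prob_Pi_pmf_sum_ge_le:
  fixes p :: "'i \<Rightarrow> 'a pmf" and Y :: "'i \<Rightarrow> 'a \<Rightarrow> real"
  assumes I: "finite I" and fin: "\<And>i. i \<in> I \<Longrightarrow> finite (set_pmf (p i))"
    and mgf: "\<And>i. i \<in> I \<Longrightarrow> measure_pmf.expectation (p i) (\<lambda>v. exp (l * Y i v)) \<le> exp c"
  shows "measure_pmf.prob (Pi_pmf I dflt p) {xs. t \<le> l * (\<Sum>i\<in>I. Y i (xs i))}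
           \<le> exp (real (card I) * c - t)"
proof -
  define M where "M = Pi_pmf I dflt p"
  define u where "u xs = (\<Prod>i\<in>I. exp (l * Y i (xs i)))" for xs
  have int: "integrable (p i) (\<lambda>v. exp (l * Y i v))" if "i \<in> I" for i
    using fin[OF that] by (rule integrable_measure_pmf_finite)
  have "measure_pmf.expectation M u = (\<Prod>i\<in>I. measure_pmf.expectation (p i) (\<lambda>v. exp (l * Y i v)))"
    unfolding M_def u_def by (rule expectation_prod_Pi_pmf) (use I int in auto)
  also have "\<dots> \<le> (\<Prod>i\<in>I. exp c)"
    by (intro prod_mono conjI Bochner_Integration.integral_nonneg mgf) auto
  also have "\<dots> = exp (real (card I) * c)"
    by (simp add: exp_of_nat_mult)
  finally have Eu: "measure_pmf.expectation M u \<le> exp (real (card I) * c)" .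
  have "u xs = exp (l * (\<Sum>i\<in>I. Y i (xs i)))" for xs
    using I by (simp add: u_def exp_sum sum_distrib_left)
  then have "{xs. t \<le> l * (\<Sum>i\<in>I. Y i (xs i))} = {xs \<in> space (measure_pmf M). exp t \<le> u xs}"
    by auto
  also have "measure_pmf.prob M \<dots> \<le> measure_pmf.expectation M u / exp t"
    unfolding M_def u_def
    by (intro integral_Markov_inequality_measure[where A = UNIV] integrable_prod_Pi_pmf I int)
       (auto simp: prod_nonneg)
  also have "\<dots> \<le> exp (real (card I) * c) / exp t"
    by (intro divide_right_mono Eu) auto
  finally show ?thesis
    by (simp add: M_def exp_diff)
qed

lemma prob_Pi_pmf_abs_sum_ge_le:
  fixes p :: "'i \<Rightarrow> 'a pmf" and Y :: "'i \<Rightarrow> 'a \<Rightarrow> real"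
  assumes I: "finite I" and fin: "\<And>i. i \<in> I \<Longrightarrow> finite (set_pmf (p i))" and l: "0 < l"
    and mgf: "\<And>i l'. i \<in> I \<Longrightarrow> \<bar>l'\<bar> = l \<Longrightarrow> measure_pmf.expectation (p i) (\<lambda>v. exp (l' * Y i v)) \<le> exp c"
  shows "measure_pmf.prob (Pi_pmf I dflt p) {xs. t \<le> \<bar>\<Sum>i\<in>I. Y i (xs i)\<bar>}
           \<le> 2 * exp (real (card I) * c - l * t)"
proof -
  let ?P = "measure_pmf.prob (Pi_pmf I dflt p)"
  have "{xs. t \<le> \<bar>\<Sum>i\<in>I. Y i (xs i)\<bar>}
      \<subseteq> {xs. l * t \<le> l * (\<Sum>i\<in>I. Y i (xs i))} \<union> {xs. l * t \<le> (- l) * (\<Sum>i\<in>I. Y i (xs i))}"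
  proof (intro subsetI, elim CollectE)
    fix xs assume "t \<le> \<bar>\<Sum>i\<in>I. Y i (xs i)\<bar>"
    then have "l * t \<le> l * \<bar>\<Sum>i\<in>I. Y i (xs i)\<bar>" using l by (simp add: mult_left_mono)
    then show "xs \<in> {xs. l * t \<le> l * (\<Sum>i\<in>I. Y i (xs i))} \<union> {xs. l * t \<le> (- l) * (\<Sum>i\<in>I. Y i (xs i))}"
      by (cases "0 \<le> (\<Sum>i\<in>I. Y i (xs i))") auto
  qed
  then have "?P {xs. t \<le> \<bar>\<Sum>i\<in>I. Y i (xs i)\<bar>}
      \<le> ?P {xs. l * t \<le> l * (\<Sum>i\<in>I. Y i (xs i))} + ?P {xs. l * t \<le> (- l) * (\<Sum>i\<in>I. Y i (xs i))}"
    by (intro order_trans[OF measure_pmf.finite_measure_mono measure_Un_le]) auto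
  also have "\<dots> \<le> exp (real (card I) * c - l * t) + exp (real (card I) * c - l * t)"
    using l by (intro add_mono prob_Pi_pmf_sum_ge_le I fin mgf) auto
  finally show ?thesis by simp
qed

definition alg2_prob :: "real \<Rightarrow> real \<Rightarrow> real \<Rightarrow> real" where
  "alg2_prob eps' del' y = (exp eps' + 2 * del' - 1) / (2 * (exp eps' + 1)) * y + 1 / 2"

lemma alg2_eq_map_bernoulli:
  "alg2 eps' del' y =
     map_pmf (\<lambda>b. if b then alg2_B eps' del' else - alg2_B eps' del') (bernoulli_pmf (alg2_prob eps' del' y))"
  by (simp add: alg2_def alg2_prob_def)

lemma set_pmf_alg2_subset: "set_pmf (alg2 eps' del' y) \<subseteq> {alg2_B eps' del', - alg2_B eps' del'}"
  by (auto simp: alg2_def)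

lemma finite_set_pmf_alg2: "finite (set_pmf (alg2 eps' del' y))"
  using set_pmf_alg2_subset by (rule finite_subset) simp

lemma alg2_denominator_pos:
  fixes eps' del' :: real
  assumes "0 < eps'" "0 \<le> del'"
  shows "0 < exp eps' + 2 * del' - 1"
proof -
  have "1 < exp eps'" using assms(1) by (rule exp_gt_one)
  then show ?thesis using assms(2) by linarith
qed

lemma alg2_prob_bounds:
  assumes "0 < eps'" "0 \<le> del'" "del' \<le> 1" "\<bar>y\<bar> \<le> 1"
  shows "0 \<le> alg2_prob eps' del' y" "alg2_prob eps' del' y \<le> 1"
proof -
  define r where "r = (exp eps' + 2 * del' - 1) / (exp eps' + 1)"
  have "0 \<le> r" "r \<le> 1"
    using alg2_denominator_pos[OF assms(1,2)] assms(3)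
    by (auto simp: r_def divide_le_eq_1 add_pos_pos)
  then have "\<bar>r * y\<bar> \<le> 1"
    using assms by (simp add: abs_mult mult_le_one)
  moreover have "alg2_prob eps' del' y = r * y / 2 + 1 / 2"
    by (simp add: alg2_prob_def r_def)
  ultimately show "0 \<le> alg2_prob eps' del' y" "alg2_prob eps' del' y \<le> 1"
    by auto
qed

lemma alg2_B_ge_1:
  assumes "0 < eps'" "0 \<le> del'" "del' \<le> 1"
  shows "1 \<le> alg2_B eps' del'"
  using alg2_denominator_pos[OF assms(1,2)] assms(3) by (simp add: alg2_B_def)

lemma alg2_B_mult_alg2_prob:
  assumes "0 < eps'" "0 \<le> del'"
  shows "alg2_B eps' del' * (2 * alg2_prob eps' del' y - 1) = y"
proof -
  define r where "r = (exp eps' + 2 * del' - 1) / (exp eps' + 1)"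
  have "exp eps' + 1 > 0" by (simp add: add_pos_pos)
  then have "alg2_B eps' del' * r = 1"
    using alg2_denominator_pos[OF assms] by (simp add: alg2_B_def r_def)
  moreover have "alg2_prob eps' del' y = r * y / 2 + 1 / 2"
    by (simp add: alg2_prob_def r_def)
  ultimately show ?thesis by (simp add: algebra_simps)
qed

lemma alg2_B_mult_le_4:
  assumes "0 < eps'" "eps' \<le> 1" "0 \<le> del'" "del' \<le> 1"
  shows "alg2_B eps' del' * (eps' + 2 * del') \<le> 4"
proof -
  have "exp eps' \<le> exp 1" using assms by simp
  then have "exp eps' + 1 \<le> 4" using exp_le by linarith
  moreover have "eps' + 2 * del' \<le> exp eps' + 2 * del' - 1"
    using exp_ge_add_one_self[of eps'] by linarith
  ultimately have "(exp eps' + 1) * (eps' + 2 * del') \<le> 4 * (exp eps' + 2 * del' - 1)"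
    using assms by (intro mult_mono) auto
  then show ?thesis
    using alg2_denominator_pos[OF assms(1,3)] by (simp add: alg2_B_def field_simps)
qed

lemma expectation_alg2:
  assumes "0 < eps'" "0 \<le> del'" "del' \<le> 1" "\<bar>y\<bar> \<le> 1"
  shows "measure_pmf.expectation (alg2 eps' del' y) f
           = f (alg2_B eps' del') * alg2_prob eps' del' y + f (- alg2_B eps' del') * (1 - alg2_prob eps' del' y)"
  using alg2_prob_bounds[OF assms] by (simp add: alg2_eq_map_bernoulli)

lemma kpar_eq_1:
  assumes "0 < eps" "eps \<le> 1"
  shows "kpar d eps = 1"
proof -
  have "\<lfloor>eps / 2.17\<rfloor> = 0" using assms by (intro floor_unique) auto
  then show ?thesis by (simp add: kpar_def)
qed

lemma alg3_1_eq:
  assumes "d \<ge> 1"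
  shows "alg3 eps del 1 d x = pmf_of_set {1..d} \<bind>
           (\<lambda>s. map_pmf (\<lambda>a j. if j = s then real d * a else 0) (alg2 eps del (x s)))"
proof -
  have "{S. S \<subseteq> {1..d} \<and> card S = 1} = (\<lambda>s. {s}) ` {1..d}"
    by (auto simp: card_1_singleton_iff)
  then have "pmf_of_set {S. S \<subseteq> {1..d} \<and> card S = 1} = map_pmf (\<lambda>s. {s}) (pmf_of_set {1..d})"
    using assms by (simp add: map_pmf_of_set_inj)
  then show ?thesis
    by (simp add: alg3_def bind_map_pmf Pi_pmf_singleton map_pmf_def bind_assoc_pmf
                  bind_return_pmf if_distrib cong: if_cong)
qed

lemma finite_set_pmf_alg3_1:
  assumes "d \<ge> 1"
  shows "finite (set_pmf (alg3 eps del 1 d x))"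
  unfolding alg3_1_eq[OF assms] using assms by (simp add: finite_set_pmf_alg2)

lemma abs_le_of_in_set_pmf_alg3_1:
  assumes "d \<ge> 1" "v \<in> set_pmf (alg3 eps del 1 d x)"
  shows "\<bar>v j\<bar> \<le> real d * \<bar>alg2_B eps del\<bar>"
  using assms(2) set_pmf_alg2_subset unfolding alg3_1_eq[OF assms(1)] by (fastforce simp: abs_mult)

lemma expectation_alg3_1_coordinate:
  assumes "d \<ge> 1" "j \<in> {1..d}"
  shows "measure_pmf.expectation (alg3 eps del 1 d x) (\<lambda>v. f (v j))
           = (measure_pmf.expectation (alg2 eps del (x j)) (\<lambda>a. f (real d * a)) + (real d - 1) * f 0) / real d"
proof -
  define E where "E s = measure_pmf.expectation (alg2 eps del (x s)) (\<lambda>a. f (if j = s then real d * a else 0))" for s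
  have "measure_pmf.expectation (alg3 eps del 1 d x) (\<lambda>v. f (v j)) = (\<Sum>s\<in>{1..d}. E s) / real d"
    unfolding alg3_1_eq[OF assms(1)] using assms(1)
    by (simp add: pmf_expectation_bind_pmf_of_set finite_set_pmf_alg2 E_def sum_distrib_left
                  divide_inverse_commute)
  also have "(\<Sum>s\<in>{1..d}. E s) = E j + (\<Sum>s\<in>{1..d} - {j}. f 0)"
    using assms(2) by (simp add: sum.remove E_def)
  also have "\<dots> = measure_pmf.expectation (alg2 eps del (x j)) (\<lambda>a. f (real d * a)) + (real d - 1) * f 0"
    using assms by (simp add: E_def of_nat_diff)
  finally show ?thesis .
qed

lemma expectation_exp_alg3_1_coordinate_le:
  assumes d: "d \<ge> 1" and j: "j \<in> {1..d}" and eps: "0 < eps" and del: "0 \<le> del" "del \<le> 1"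
    and x: "\<bar>x j\<bar> \<le> 1" and l: "\<bar>l\<bar> * (real d * alg2_B eps del + 1) \<le> 1"
  shows "measure_pmf.expectation (alg3 eps del 1 d x) (\<lambda>v. exp (l * (v j - x j)))
           \<le> exp (l\<^sup>2 * (real d * (alg2_B eps del)\<^sup>2))"
proof (rule expectation_exp_le_exp_second_moment)
  let ?B = "alg2_B eps del" and ?p = "alg2_prob eps del (x j)"
  have B: "1 \<le> ?B" using eps del by (rule alg2_B_ge_1)
  have "measure_pmf.expectation (alg3 eps del 1 d x) (\<lambda>v. v j) = ?B * (2 * ?p - 1)"
    unfolding expectation_alg3_1_coordinate[OF d j, where f = "\<lambda>a. a"]
    using d eps del x by (simp add: expectation_alg2 field_simps)
  then show "measure_pmf.expectation (alg3 eps del 1 d x) (\<lambda>v. v j) = x j"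
    using eps del by (simp add: alg2_B_mult_alg2_prob)
  show "measure_pmf.expectation (alg3 eps del 1 d x) (\<lambda>v. (v j)\<^sup>2) \<le> real d * ?B\<^sup>2"
    unfolding expectation_alg3_1_coordinate[OF d j, where f = "\<lambda>a. a\<^sup>2"]
    using d eps del x by (simp add: expectation_alg2 power2_eq_square field_simps)
  fix v assume "v \<in> set_pmf (alg3 eps del 1 d x)"
  then have "\<bar>v j\<bar> \<le> real d * ?B"
    using abs_le_of_in_set_pmf_alg3_1[OF d] B by fastforce
  then have "\<bar>v j - x j\<bar> \<le> real d * ?B + 1"
    using x by linarith
  then have "\<bar>l\<bar> * \<bar>v j - x j\<bar> \<le> 1"
    using l by (meson abs_ge_zero mult_left_mono order_trans)
  then show "\<bar>l * (v j - x j)\<bar> \<le> 1" by (simp add: abs_mult)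
qed (rule finite_set_pmf_alg3_1[OF d])

lemma prob_alg3_all_coordinate_deviation_ge_le:
  assumes d: "d \<ge> 1" and j: "j \<in> {1..d}" and eps: "0 < eps" "eps \<le> 1" and del: "0 \<le> del" "del \<le> 1"
    and x: "\<And>i. i \<in> {1..N} \<Longrightarrow> \<bar>x i j\<bar> \<le> 1"
    and l: "0 < l" "l * (real d * alg2_B eps del + 1) \<le> 1"
  shows "measure_pmf.prob (alg3_all eps del d N x) {xs. t \<le> \<bar>\<Sum>i=1..N. xs i j - x i j\<bar>}
           \<le> 2 * exp (real N * (l\<^sup>2 * (real d * (alg2_B eps del)\<^sup>2)) - l * t)"
proof -
  have "measure_pmf.prob (Pi_pmf {1..N} (\<lambda>_. 0) (\<lambda>i. alg3 eps del 1 d (x i)))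
          {xs. t \<le> \<bar>\<Sum>i=1..N. xs i j - x i j\<bar>}
        \<le> 2 * exp (real (card {1..N}) * (l\<^sup>2 * (real d * (alg2_B eps del)\<^sup>2)) - l * t)"
  proof (rule prob_Pi_pmf_abs_sum_ge_le[where Y = "\<lambda>i v. v j - x i j"])
    fix i and l' :: real assume i: "i \<in> {1..N}" and l': "\<bar>l'\<bar> = l"
    show "measure_pmf.expectation (alg3 eps del 1 d (x i)) (\<lambda>v. exp (l' * (v j - x i j)))
            \<le> exp (l\<^sup>2 * (real d * (alg2_B eps del)\<^sup>2))"
      using expectation_exp_alg3_1_coordinate_le[OF d j eps(1) del, of "x i" l'] x[OF i] l l'
      by (simp add: power2_abs[of l', symmetric])
  qed (use finite_set_pmf_alg3_1[OF d] l in simp_all)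
  then show ?thesis
    unfolding alg3_all_def kpar_eq_1[OF eps] by simp
qed

lemma chernoff_parameter_choice:
  fixes d N B L :: real
  assumes d: "1 \<le> d" and N: "0 < N" and B: "1 \<le> B" and L: "0 < L" and N_large: "d * L \<le> N"
  defines "r \<equiv> sqrt (d * L / N)"
  defines "l \<equiv> r / (2 * d * B)"
  shows "0 < l" "l * (d * B + 1) \<le> 1"
    and "N * (l\<^sup>2 * (d * B\<^sup>2)) - l * (3 * N * B * r) = - (5 / 4) * L"
proof -
  have r: "0 < r" "r\<^sup>2 = d * L / N" using d N L by (auto simp: r_def)
  show "0 < l" using r d B by (simp add: l_def)
  have "1 \<le> d * B" using B d mult_mono[of 1 d 1 B] by simp
  then have "d * B + 1 \<le> 2 * d * B" by linarith
  then have "l * (d * B + 1) \<le> l * (2 * d * B)" using \<open>0 < l\<close> by simp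
  also have "\<dots> = r" using d B by (simp add: l_def)
  also have "r\<^sup>2 \<le> 1" using r(2) N_large N by simp
  then have "r \<le> 1" using r(1) by (simp add: power_le_one_iff)
  finally show "l * (d * B + 1) \<le> 1" .
  have "N * (l\<^sup>2 * (d * B\<^sup>2)) = N * r\<^sup>2 / (4 * d)"
    using d B by (simp add: l_def power_divide power_mult_distrib power2_eq_square field_simps)
  moreover have "l * (3 * N * B * r) = 3 * N * r\<^sup>2 / (2 * d)"
    using d B by (simp add: l_def power2_eq_square field_simps)
  ultimately show "N * (l\<^sup>2 * (d * B\<^sup>2)) - l * (3 * N * B * r) = - (5 / 4) * L"
    using d N by (simp add: r(2) field_simps)
qed

lemma prob_alg3_all_max_deviation_le:
  fixes x :: "nat \<Rightarrow> nat \<Rightarrow> real"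
  assumes d: "d \<ge> 1" and N: "N \<ge> 1" and eps: "0 < eps" "eps \<le> 1" and del: "0 \<le> del" "del \<le> 1"
    and \<beta>: "0 < \<beta>" "\<beta> < 2 * real d" and N_large: "real d * ln (2 * real d / \<beta>) \<le> real N"
    and x: "\<forall>i\<in>{1..N}. \<forall>j\<in>{1..d}. \<bar>x i j\<bar> \<le> 1"
  shows "1 - \<beta> \<le> measure_pmf.prob (alg3_all eps del d N x)
           {xs. Max ((\<lambda>j. \<bar>(\<Sum>i=1..N. xs i j) / real N - (\<Sum>i=1..N. x i j) / real N\<bar>) ` {1..d})
                  \<le> 3 * alg2_B eps del * sqrt (real d * ln (2 * real d / \<beta>) / real N)}"
    (is "_ \<le> measure_pmf.prob ?M ?good")
proof -
  define B where "B = alg2_B eps del"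
  define L where "L = ln (2 * real d / \<beta>)"
  define r where "r = sqrt (real d * L / real N)"
  define l where "l = r / (2 * real d * B)"
  define t where "t = 3 * real N * B * r"
  define bad where "bad j = {xs. t \<le> \<bar>\<Sum>i=1..N. xs i j - x i j\<bar>}" for j
  have dN: "0 < real d" "0 < real N" using d N by auto
  have L: "0 < L" using \<beta> by (simp add: L_def)
  have d_ge_1: "1 \<le> real d" using d by simp
  have B: "1 \<le> B" unfolding B_def using eps(1) del by (rule alg2_B_ge_1)
  note params = chernoff_parameter_choice[OF d_ge_1 dN(2) B L N_large[folded L_def],
                  folded r_def, folded l_def t_def]
  have l: "0 < l" "l * (real d * B + 1) \<le> 1" using params(1,2) .
  have exponent: "real N * (l\<^sup>2 * (real d * B\<^sup>2)) - l * t = - (5 / 4) * L" using params(3) .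
  have prob_bad: "measure_pmf.prob ?M (bad j) \<le> \<beta> / real d" if j: "j \<in> {1..d}" for j
  proof -
    have "measure_pmf.prob ?M (bad j) \<le> 2 * exp (- (5 / 4) * L)"
      unfolding bad_def exponent[symmetric] B_def
      using x j by (intro prob_alg3_all_coordinate_deviation_ge_le d eps del l[unfolded B_def]) auto
    also have "\<dots> \<le> 2 * exp (- L)" using L by simp
    also have "\<dots> = \<beta> / real d" using \<beta> dN by (simp add: L_def exp_minus)
    finally show ?thesis .
  qed
  have "measure_pmf.prob ?M (\<Union>j\<in>{1..d}. bad j) \<le> (\<Sum>j\<in>{1..d}. measure_pmf.prob ?M (bad j))"
    by (rule measure_pmf.finite_measure_subadditive_finite) auto
  also have "\<dots> \<le> (\<Sum>j\<in>{1..d}. \<beta> / real d)" by (intro sum_mono prob_bad)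
  also have "\<dots> = \<beta>" using dN by simp
  finally have prob_bad_union: "measure_pmf.prob ?M (\<Union>j\<in>{1..d}. bad j) \<le> \<beta>" .
  have "- (\<Union>j\<in>{1..d}. bad j) \<subseteq> ?good"
  proof (intro subsetI CollectI)
    fix xs assume "xs \<in> - (\<Union>j\<in>{1..d}. bad j)"
    then have "\<bar>\<Sum>i=1..N. xs i j - x i j\<bar> \<le> t" if "j \<in> {1..d}" for j
      using that by (fastforce simp: bad_def not_le)
    then have "\<bar>\<Sum>i=1..N. xs i j - x i j\<bar> / real N \<le> t / real N" if "j \<in> {1..d}" for j
      using that dN by (simp add: divide_right_mono)
    moreover have "t / real N = 3 * B * sqrt (real d * L / real N)" using dN by (simp add: t_def r_def)
    ultimately show "Max ((\<lambda>j. \<bar>(\<Sum>i=1..N. xs i j) / real N - (\<Sum>i=1..N. x i j) / real N\<bar>) ` {1..d})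
                       \<le> 3 * alg2_B eps del * sqrt (real d * ln (2 * real d / \<beta>) / real N)"
      using d dN by (simp add: Max_le_iff B_def L_def sum_subtractf abs_divide flip: diff_divide_distrib)
  qed
  then have "measure_pmf.prob ?M (- (\<Union>j\<in>{1..d}. bad j)) \<le> measure_pmf.prob ?M ?good"
    by (rule measure_pmf.finite_measure_mono) simp
  moreover have "measure_pmf.prob ?M (- (\<Union>j\<in>{1..d}. bad j)) = 1 - measure_pmf.prob ?M (\<Union>j\<in>{1..d}. bad j)"
    using measure_pmf.prob_compl[of "\<Union>j\<in>{1..d}. bad j" ?M] by (simp add: Compl_eq_Diff_UNIV)
  ultimately show ?thesis using prob_bad_union by linarith
qed

lemma ln_mult_2_le:
  fixes y :: real
  assumes "2 \<le> y"
  shows "ln (2 * y) \<le> 2 * ln y"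
proof -
  have "ln (2 * y) = ln 2 + ln y" using assms by (simp add: ln_mult)
  moreover have "ln 2 \<le> ln y" using assms by simp
  ultimately show ?thesis by simp
qed

lemma alg2_B_deviation_bound_le:
  assumes eps: "0 < eps" "eps \<le> 1" and del: "0 \<le> del" "del \<le> 1"
    and "2 \<le> real d / \<beta>" "0 < real N"
  shows "3 * alg2_B eps del * sqrt (real d * ln (2 * real d / \<beta>) / real N)
           \<le> 20 * sqrt (real d * ln (real d / \<beta>)) / ((eps + 2 * del) * sqrt (real N))"
proof -
  let ?D = "sqrt (real d * ln (real d / \<beta>))"
  have pos: "0 < eps + 2 * del" using eps del by simp
  have "0 < real d" using assms(5) by (cases "d = 0") auto
  then have "real d * ln (2 * real d / \<beta>) \<le> 2 * (real d * ln (real d / \<beta>))"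
    using ln_mult_2_le[OF assms(5)] by simp
  then have "sqrt (real d * ln (2 * real d / \<beta>)) \<le> sqrt 2 * ?D"
    by (simp flip: real_sqrt_mult)
  then have "sqrt (real d * ln (2 * real d / \<beta>) / real N) \<le> sqrt 2 * ?D / sqrt (real N)"
    by (simp add: real_sqrt_divide divide_right_mono)
  also have "\<dots> \<le> 5 / 3 * ?D / sqrt (real N)"
    using \<open>0 < real d\<close> assms(5)
    by (intro divide_right_mono mult_right_mono real_le_lsqrt) (auto simp: power2_eq_square)
  finally have sqrt_le: "sqrt (real d * ln (2 * real d / \<beta>) / real N) \<le> 5 / 3 * ?D / sqrt (real N)" .
  have "alg2_B eps del \<le> 4 / (eps + 2 * del)"
    using alg2_B_mult_le_4[OF eps del] pos by (simp add: field_simps)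
  then have "3 * alg2_B eps del * sqrt (real d * ln (2 * real d / \<beta>) / real N)
      \<le> 3 * (4 / (eps + 2 * del)) * (5 / 3 * ?D / sqrt (real N))"
  proof (intro mult_mono mult_left_mono)
    have "0 \<le> ln (2 * (real d / \<beta>))" using assms(5) by simp
    then show "0 \<le> sqrt (real d * ln (2 * real d / \<beta>) / real N)" by simp
  qed (use sqrt_le pos alg2_B_ge_1[OF eps(1) del] in auto)
  also have "\<dots> = 20 * ?D / ((eps + 2 * del) * sqrt (real N))"
    by (simp add: divide_simps)
  finally show ?thesis .
qed

theorem theorem4:
  shows "\<exists>C>0. \<forall>(d::nat) (N::nat) (eps::real) (del::real) (\<beta>::real) (x :: nat \<Rightarrow> nat \<Rightarrow> real).
     d \<ge> 1 \<longrightarrow> N \<ge> 1 \<longrightarrow> 0 < eps \<longrightarrow> eps \<le> 1 \<longrightarrow> 0 \<le> del \<longrightarrow> del \<le> 1 \<longrightarrow>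
     0 < \<beta> \<longrightarrow> \<beta> \<le> 1/2 \<longrightarrow> real N \<ge> real d * ln (2 * real d / \<beta>) \<longrightarrow>
     (\<forall>i\<in>{1..N}. \<forall>j\<in>{1..d}. \<bar>x i j\<bar> \<le> 1) \<longrightarrow>
     measure_pmf.prob (alg3_all eps del d N x)
       {xs. Max ((\<lambda>j. \<bar>(\<Sum>i=1..N. xs i j) / real N - (\<Sum>i=1..N. x i j) / real N\<bar>) ` {1..d})
              \<le> C * sqrt (real d * ln (real d / \<beta>)) / ((eps + 2 * del) * sqrt (real N))}
       \<ge> 1 - \<beta>"
proof (intro exI[of _ 20] conjI allI impI)
  fix d N :: nat and eps del \<beta> :: real and x :: "nat \<Rightarrow> nat \<Rightarrow> real"
  assume d: "d \<ge> 1" and N: "N \<ge> 1" and eps: "0 < eps" "eps \<le> 1" and del: "0 \<le> del" "del \<le> 1"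
    and \<beta>: "0 < \<beta>" "\<beta> \<le> 1/2" and N_large: "real N \<ge> real d * ln (2 * real d / \<beta>)"
    and x: "\<forall>i\<in>{1..N}. \<forall>j\<in>{1..d}. \<bar>x i j\<bar> \<le> 1"
  let ?dev = "\<lambda>xs. Max ((\<lambda>j. \<bar>(\<Sum>i=1..N. xs i j) / real N - (\<Sum>i=1..N. x i j) / real N\<bar>) ` {1..d})"
  have d_over_\<beta>: "2 \<le> real d / \<beta>" using d \<beta> by (simp add: field_simps)
  have "1 - \<beta> \<le> measure_pmf.prob (alg3_all eps del d N x)
          {xs. ?dev xs \<le> 3 * alg2_B eps del * sqrt (real d * ln (2 * real d / \<beta>) / real N)}"
    using d \<beta> by (intro prob_alg3_all_max_deviation_le d N eps del N_large x) auto
  also have "\<dots> \<le> measure_pmf.prob (alg3_all eps del d N x)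
          {xs. ?dev xs \<le> 20 * sqrt (real d * ln (real d / \<beta>)) / ((eps + 2 * del) * sqrt (real N))}"
    using alg2_B_deviation_bound_le[OF eps del d_over_\<beta>, of N] N
    by (intro measure_pmf.finite_measure_mono) (auto elim: order_trans)
  finally show "1 - \<beta> \<le> measure_pmf.prob (alg3_all eps del d N x)
          {xs. ?dev xs \<le> 20 * sqrt (real d * ln (real d / \<beta>)) / ((eps + 2 * del) * sqrt (real N))}" .
qed simp

end
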